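(* Let $\mathbf{A}_1$ be an algebra over a signature $\Theta$ with universe $\{0,1/2,1\}$, and let $L_1=\langle\mathbf{A}_1,F_1\rangle$ with $0\notin F_1$ and $1\in F_1$. Let $\mathbf{A}_2$ be a subalgebra of $\mathbf{A}_1$ with universe $\{0,1\}$, and let $L_2=\langle\mathbf{A}_2,\{1\}\rangle$ (a presentation of classical propositional logic over $\Theta$), with $L_2$ distinct from $L_1$. Suppose there are formulas $\top(p)$ and $\bot(p)$ in one variable $p$ with $e(\top(p))=1$ and $e(\bot(p))=0$ for every evaluation $e$ into $\mathbf{A}_1$. Then $L_1$ is maximal with respect to $L_2$.
   Context: A logical matrix is a pair $\langle\mathbf{A},F\rangle$ with $\mathbf{A}$ an algebra over $\Theta$ and $\emptyset\neq F\subseteq A$; the matrix logic has consequence relation $\Gamma\vdash\varphi$ iff every homomorphism $e$ from the formula algebra into $\mathbf{A}$ with $e[\Gamma]\subseteq F$ satisfies $e(\varphi)\in F$. $L_1$ is maximal with respect to $L_2$ if ${\vdash_{L_1}}\subsetneq{\vdash_{L_2}}$ and for every formula $\varphi$ with $\vdash_{L_2}\varphi$ but $\nvdash_{L_1}\varphi$, the logic obtained from $L_1$ by adding all substitution instances of $\varphi$ as extra premises (i.e. $\Gamma\vdash\psi$ iff $\Gamma\cup\{\sigma(\varphi):\sigma\text{ substitution}\}\vdash_{L_1}\psi$) coincides with $L_2$. *)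

theory Defs
  imports Main "HOL-Library.Rewrite" Complex_Main
begin

datatype 'f form = Var nat | Op 'f "'f form list"

fun wf :: "('f \<Rightarrow> nat) \<Rightarrow> 'f form \<Rightarrow> bool" where
  "wf ar (Var n) = True"
| "wf ar (Op f ts) = (length ts = ar f \<and> (\<forall>t\<in>set ts. wf ar t))"

definition wff :: "('f \<Rightarrow> nat) \<Rightarrow> 'f form set" where
  "wff ar = {\<phi>. wf ar \<phi>}"

fun vars :: "'f form \<Rightarrow> nat set" where
  "vars (Var n) = {n}"
| "vars (Op f ts) = (\<Union>t\<in>set ts. vars t)"

fun eval :: "('f \<Rightarrow> 'a list \<Rightarrow> 'a) \<Rightarrow> (nat \<Rightarrow> 'a) \<Rightarrow> 'f form \<Rightarrow> 'a" where
  "eval I v (Var n) = v n"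
| "eval I v (Op f ts) = I f (map (eval I v) ts)"

fun subst :: "(nat \<Rightarrow> 'f form) \<Rightarrow> 'f form \<Rightarrow> 'f form" where
  "subst \<sigma> (Var n) = \<sigma> n"
| "subst \<sigma> (Op f ts) = Op f (map (subst \<sigma>) ts)"

text \<open>A carrier set A is closed under the operations (so (A, I restricted to A) is an algebra).\<close>
definition closed :: "('f \<Rightarrow> nat) \<Rightarrow> ('f \<Rightarrow> 'a list \<Rightarrow> 'a) \<Rightarrow> 'a set \<Rightarrow> bool" where
  "closed ar I A = (\<forall>f xs. length xs = ar f \<longrightarrow> set xs \<subseteq> A \<longrightarrow> I f xs \<in> A)"

definition matrix_cons :: "('f \<Rightarrow> 'a list \<Rightarrow> 'a) \<Rightarrow> 'a set \<Rightarrow> 'a set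
    \<Rightarrow> 'f form set \<Rightarrow> 'f form \<Rightarrow> bool" where
  "matrix_cons I A F \<Gamma> \<phi> = (\<forall>v. range v \<subseteq> A \<longrightarrow> (\<forall>\<gamma>\<in>\<Gamma>. eval I v \<gamma> \<in> F) \<longrightarrow> eval I v \<phi> \<in> F)"

text \<open>Logics are consequence relations, considered on well-formed formulas only.\<close>
definition same_logic :: "('f \<Rightarrow> nat) \<Rightarrow> ('f form set \<Rightarrow> 'f form \<Rightarrow> bool)
    \<Rightarrow> ('f form set \<Rightarrow> 'f form \<Rightarrow> bool) \<Rightarrow> bool" where
  "same_logic ar C1 C2 = (\<forall>\<Gamma> \<psi>. \<Gamma> \<subseteq> wff ar \<longrightarrow> \<psi> \<in> wff ar \<longrightarrow> (C1 \<Gamma> \<psi> \<longleftrightarrow> C2 \<Gamma> \<psi>))"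

definition sub_logic :: "('f \<Rightarrow> nat) \<Rightarrow> ('f form set \<Rightarrow> 'f form \<Rightarrow> bool)
    \<Rightarrow> ('f form set \<Rightarrow> 'f form \<Rightarrow> bool) \<Rightarrow> bool" where
  "sub_logic ar C1 C2 = (\<forall>\<Gamma> \<psi>. \<Gamma> \<subseteq> wff ar \<longrightarrow> \<psi> \<in> wff ar \<longrightarrow> C1 \<Gamma> \<psi> \<longrightarrow> C2 \<Gamma> \<psi>)"

definition strict_sub_logic :: "('f \<Rightarrow> nat) \<Rightarrow> ('f form set \<Rightarrow> 'f form \<Rightarrow> bool)
    \<Rightarrow> ('f form set \<Rightarrow> 'f form \<Rightarrow> bool) \<Rightarrow> bool" where
  "strict_sub_logic ar C1 C2 = (sub_logic ar C1 C2 \<and> \<not> same_logic ar C1 C2)"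

definition sub_insts :: "('f \<Rightarrow> nat) \<Rightarrow> 'f form \<Rightarrow> 'f form set" where
  "sub_insts ar \<phi> = {subst \<sigma> \<phi> | \<sigma>. \<forall>n. wf ar (\<sigma> n)}"

definition axiom_ext :: "('f \<Rightarrow> nat) \<Rightarrow> ('f form set \<Rightarrow> 'f form \<Rightarrow> bool) \<Rightarrow> 'f form
    \<Rightarrow> 'f form set \<Rightarrow> 'f form \<Rightarrow> bool" where
  "axiom_ext ar C \<phi> \<Gamma> \<psi> = C (\<Gamma> \<union> sub_insts ar \<phi>) \<psi>"

definition maximal_wrt :: "('f \<Rightarrow> nat) \<Rightarrow> ('f form set \<Rightarrow> 'f form \<Rightarrow> bool)
    \<Rightarrow> ('f form set \<Rightarrow> 'f form \<Rightarrow> bool) \<Rightarrow> bool" where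
  "maximal_wrt ar C1 C2 = (strict_sub_logic ar C1 C2 \<and>
     (\<forall>\<phi>\<in>wff ar. C2 {} \<phi> \<longrightarrow> \<not> C1 {} \<phi> \<longrightarrow> same_logic ar (axiom_ext ar C1 \<phi>) C2))"

end

theory Submission
  imports Defs
begin

text \<open>Classical logic is the submatrix of L1 on {0,1}, so every L1-inference is classically
  valid. Conversely, let \<phi> be a classical tautology that fails in L1 at some valuation w,
  and let v be a valuation into {0,1/2,1} designating all substitution instances of \<phi>.
  If v took the value 1/2 at a variable m, then bot, Var m and top would denote 0, 1/2
  and 1 under v; substituting them for the variables of \<phi> according to w gives an instance
  that v evaluates like w evaluates \<phi>, i.e. outside F1. Hence v is classical, and on
  classical valuations L1 and L2 agree.\<close>

lemma eval_closed:
  assumes "closed ar I A" "range v \<subseteq> A"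
  shows "wf ar t \<Longrightarrow> eval I v t \<in> A"
proof (induction t)
  case (Var n)
  then show ?case using assms(2) by auto
next
  case (Op f ts)
  then have "set (map (eval I v) ts) \<subseteq> A" "length (map (eval I v) ts) = ar f" by auto
  then show ?case using assms(1) unfolding closed_def by simp
qed

lemma eval_subst: "eval I v (subst \<sigma> t) = eval I (\<lambda>n. eval I v (\<sigma> n)) t"
  by (induction t) (simp_all cong: map_cong)

lemma wf_subst: "(\<And>n. wf ar (\<sigma> n)) \<Longrightarrow> wf ar t \<Longrightarrow> wf ar (subst \<sigma> t)"
  by (induction t) auto

lemma sub_insts_subset_wff: "\<phi> \<in> wff ar \<Longrightarrow> sub_insts ar \<phi> \<subseteq> wff ar"
  by (auto simp: sub_insts_def wff_def intro: wf_subst)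

lemma sub_logic_submatrix:
  assumes "closed ar I B" "B \<subseteq> A"
  shows "sub_logic ar (matrix_cons I A F) (matrix_cons I B (F \<inter> B))"
  unfolding sub_logic_def matrix_cons_def
proof (intro allI impI)
  fix \<Gamma> \<psi> v
  assume \<psi>: "\<psi> \<in> wff ar" and valid: "\<forall>v. range v \<subseteq> A \<longrightarrow> (\<forall>\<gamma>\<in>\<Gamma>. eval I v \<gamma> \<in> F) \<longrightarrow> eval I v \<psi> \<in> F"
    and v: "range v \<subseteq> B" and \<Gamma>: "\<forall>\<gamma>\<in>\<Gamma>. eval I v \<gamma> \<in> F \<inter> B"
  have "eval I v \<psi> \<in> F" using valid v \<Gamma> assms(2) by blast
  moreover have "eval I v \<psi> \<in> B" using eval_closed[OF assms(1) v] \<psi> by (simp add: wff_def)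
  ultimately show "eval I v \<psi> \<in> F \<inter> B" by blast
qed

lemma matrix_cons_sub_insts:
  assumes "closed ar I A" "matrix_cons I A F {} \<phi>" "range v \<subseteq> A" "\<psi> \<in> sub_insts ar \<phi>"
  shows "eval I v \<psi> \<in> F"
proof -
  obtain \<sigma> where \<psi>: "\<psi> = subst \<sigma> \<phi>" and \<sigma>: "\<forall>n. wf ar (\<sigma> n)"
    using assms(4) unfolding sub_insts_def by blast
  have "range (\<lambda>n. eval I v (\<sigma> n)) \<subseteq> A" using eval_closed[OF assms(1,3)] \<sigma> by auto
  then show ?thesis using assms(2) unfolding \<psi> eval_subst matrix_cons_def by blast
qed

text \<open>If every element of A is denoted under v by some formula, every valuation into A
  factors through v by a substitution.\<close>

lemma matrix_cons_if_sub_insts_designated: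
  assumes generating: "A \<subseteq> eval I v ` wff ar"
    and insts: "\<forall>\<psi>\<in>sub_insts ar \<phi>. eval I v \<psi> \<in> F"
  shows "matrix_cons I A F {} \<phi>"
  unfolding matrix_cons_def
proof (intro allI impI)
  fix w :: "nat \<Rightarrow> _" assume w: "range w \<subseteq> A"
  have "\<exists>t. t \<in> wff ar \<and> eval I v t = w n" for n
    using w generating by (metis imageE rangeI subsetD)
  then obtain \<sigma> where \<sigma>: "\<And>n. \<sigma> n \<in> wff ar" "\<And>n. eval I v (\<sigma> n) = w n"
    by metis
  have "subst \<sigma> \<phi> \<in> sub_insts ar \<phi>" using \<sigma>(1) unfolding sub_insts_def wff_def by blast
  then have "eval I v (subst \<sigma> \<phi>) \<in> F" using insts by blast
  moreover have "eval I v (subst \<sigma> \<phi>) = eval I w \<phi>" by (simp add: eval_subst \<sigma>(2))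
  ultimately show "eval I w \<phi> \<in> F" by simp
qed

lemma axiom_ext_submatrix_same_logic:
  assumes B: "closed ar I B" "B \<subseteq> A"
    and generating: "\<And>v. range v \<subseteq> A \<Longrightarrow> \<not> range v \<subseteq> B \<Longrightarrow> A \<subseteq> eval I v ` wff ar"
    and \<phi>: "\<phi> \<in> wff ar" "matrix_cons I B (F \<inter> B) {} \<phi>" "\<not> matrix_cons I A F {} \<phi>"
  shows "same_logic ar (axiom_ext ar (matrix_cons I A F) \<phi>) (matrix_cons I B (F \<inter> B))"
  unfolding same_logic_def axiom_ext_def
proof (intro allI impI iffI)
  fix \<Gamma> \<psi> assume \<Gamma>: "\<Gamma> \<subseteq> wff ar" and \<psi>: "\<psi> \<in> wff ar"
  {
    assume "matrix_cons I A F (\<Gamma> \<union> sub_insts ar \<phi>) \<psi>"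
    then have "matrix_cons I B (F \<inter> B) (\<Gamma> \<union> sub_insts ar \<phi>) \<psi>"
      using sub_logic_submatrix[OF B] \<Gamma> \<psi> sub_insts_subset_wff[OF \<phi>(1)]
      unfolding sub_logic_def by blast
    then show "matrix_cons I B (F \<inter> B) \<Gamma> \<psi>"
      using matrix_cons_sub_insts[OF B(1) \<phi>(2)] unfolding matrix_cons_def by blast
  next
    assume valid: "matrix_cons I B (F \<inter> B) \<Gamma> \<psi>"
    show "matrix_cons I A F (\<Gamma> \<union> sub_insts ar \<phi>) \<psi>"
      unfolding matrix_cons_def
    proof (intro allI impI)
      fix v assume v: "range v \<subseteq> A" and designated: "\<forall>\<gamma>\<in>\<Gamma> \<union> sub_insts ar \<phi>. eval I v \<gamma> \<in> F"
      have vB: "range v \<subseteq> B"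
        using matrix_cons_if_sub_insts_designated[OF generating[OF v]] designated \<phi>(3) by blast
      have "\<forall>\<gamma>\<in>\<Gamma>. eval I v \<gamma> \<in> F \<inter> B"
        using designated eval_closed[OF B(1) vB] \<Gamma> by (auto simp: wff_def)
      then show "eval I v \<psi> \<in> F" using valid vB unfolding matrix_cons_def by blast
    qed
  }
qed

lemma maximal_wrt_submatrix:
  assumes B: "closed ar I B" "B \<subseteq> A"
    and distinct: "\<not> same_logic ar (matrix_cons I A F) (matrix_cons I B (F \<inter> B))"
    and generating: "\<And>v. range v \<subseteq> A \<Longrightarrow> \<not> range v \<subseteq> B \<Longrightarrow> A \<subseteq> eval I v ` wff ar"
  shows "maximal_wrt ar (matrix_cons I A F) (matrix_cons I B (F \<inter> B))"
  using sub_logic_submatrix[OF B] distinct axiom_ext_submatrix_same_logic[OF B generating]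
  unfolding maximal_wrt_def strict_sub_logic_def by blast

theorem corollary2p3:
  fixes ar :: "'f \<Rightarrow> nat" and I :: "'f \<Rightarrow> real list \<Rightarrow> real"
    and F1 :: "real set" and top bot :: "'f form" and p :: nat
  assumes A1: "closed ar I {0, 1/2, 1}"
    and F1: "F1 \<subseteq> {0, 1/2, 1}" "0 \<notin> F1" "1 \<in> F1"
    and A2: "closed ar I {0, 1}"
    and distinct: "\<not> same_logic ar (matrix_cons I {0, 1/2, 1} F1) (matrix_cons I {0, 1} {1})"
    and top: "wf ar top" "vars top \<subseteq> {p}"
      "\<And>v. range v \<subseteq> {0, 1/2, 1} \<Longrightarrow> eval I v top = 1"
    and bot: "wf ar bot" "vars bot \<subseteq> {p}"
      "\<And>v. range v \<subseteq> {0, 1/2, 1} \<Longrightarrow> eval I v bot = 0"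
  shows "maximal_wrt ar (matrix_cons I {0, 1/2, 1} F1) (matrix_cons I {0, 1} {1})"
proof -
  have F2: "F1 \<inter> {0, 1} = {1}" using F1(2,3) by auto
  have generating: "{0, 1/2, 1} \<subseteq> eval I v ` wff ar"
    if v: "range v \<subseteq> {0, 1/2, 1}" and nonclassical: "\<not> range v \<subseteq> {0, 1}" for v
  proof -
    obtain m where "v m = 1/2" using v nonclassical by fastforce
    then have "eval I v bot = 0" "eval I v (Var m) = 1/2" "eval I v top = 1"
      using top(3)[OF v] bot(3)[OF v] by simp_all
    moreover have "bot \<in> wff ar" "Var m \<in> wff ar" "top \<in> wff ar"
      using top(1) bot(1) by (simp_all add: wff_def)
    ultimately show ?thesis by (auto intro: rev_image_eqI)
  qed
  have "{0, 1} \<subseteq> {0, 1/2, 1::real}" by auto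
  from maximal_wrt_submatrix[OF A2 this _ generating, of F1, unfolded F2] distinct
  show ?thesis .
qed

end
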